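(* Let $\mathfrak{X}=(X,\{R_i\}_{i=0}^{d+1})$ be a commutative association scheme with $R_d^{\top}=R_{d+1}$ and $R_i^{\top}=R_i$ for $0\leq i\leq d-1$, and let $\tilde{\mathfrak{X}}=(X,\{\tilde R_i\}_{i=0}^{d})$ be its symmetrization, where $\tilde R_i=R_i$ for $0\le i\le d-1$ and $\tilde R_d=R_d\cup R_{d+1}$. Suppose that the graph $(X,R_d\cup R_{d+1})$ generates $\tilde{\mathfrak{X}}$. Then: (i) the adjacency matrix of the digraph $(X,R_d)$ has exactly $d+2$ distinct eigenvalues; (ii) the digraph $(X,R_d)$ generates the association scheme $\mathfrak{X}$.
   Context: A $d$-class association scheme $(X,\{R_i\}_{i=0}^d)$ consists of a finite set $X$ and a partition of $X\times X$ into nonempty relations $R_0,\dots,R_d$ such that $R_0=\{(x,x):x\in X\}$, each transpose $R_i^\top=\{(y,x):(x,y)\in R_i\}$ equals some $R_{i'}$, and for all $i,j,l$ the number of $z$ with $(x,z)\in R_i,(z,y)\in R_j$ is a constant $p_{i,j}^l$ whenever $(x,y)\in R_l$. It is commutative if $p^l_{i,j}=p^l_{j,i}$ for all $i,j,l$. The adjacency matrix $A_i$ of $R_i$ is the $X\times X$ $01$-matrix with $(x,y)$-entry $1$ iff $(x,y)\in R_i$; the Bose–Mesner algebra $\mathcal M$ is the complex algebra spanned by $A_0,\dots,A_d$. The symmetrization $(X,\{R_0\}\cup\{R_i\cup R_i^\top\})$ is again an association scheme. For a relation $R\subseteq X\times X$ not meeting the diagonal, $(X,R)$ is a digraph (a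 graph if $R$ is symmetric) whose adjacency matrix is the $01$-matrix of $R$, and its eigenvalues are those of that matrix. A (di)graph with adjacency matrix $A$ generates a commutative association scheme if $A$ generates its Bose–Mesner algebra $\mathcal M$, i.e. every element of $\mathcal M$ is a polynomial in $A$. *)

theory Defs
  imports "HOL-Analysis.Analysis" "HOL-Computational_Algebra.Polynomial"
begin

text \<open>The point set X is the (finite, nonempty) type 'a; relations are indexed by
  0..D via R :: nat => ('a * 'a) set.\<close>

definition assoc_scheme :: "(nat \<Rightarrow> ('a::finite \<times> 'a) set) \<Rightarrow> nat \<Rightarrow> bool" where
  "assoc_scheme R D \<longleftrightarrow>
     (\<forall>i\<le>D. R i \<noteq> {}) \<and>
     (\<forall>i\<le>D. \<forall>j\<le>D. i \<noteq> j \<longrightarrow> R i \<inter> R j = {}) \<and>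
     (\<Union>i\<in>{..D}. R i) = UNIV \<and>
     R 0 = Id \<and>
     (\<forall>i\<le>D. \<exists>j\<le>D. converse (R i) = R j) \<and>
     (\<forall>i\<le>D. \<forall>j\<le>D. \<forall>l\<le>D. \<exists>p::nat. \<forall>x y. (x, y) \<in> R l \<longrightarrow>
         card {z. (x, z) \<in> R i \<and> (z, y) \<in> R j} = p)"

definition commutative_scheme :: "(nat \<Rightarrow> ('a::finite \<times> 'a) set) \<Rightarrow> nat \<Rightarrow> bool" where
  "commutative_scheme R D \<longleftrightarrow> assoc_scheme R D \<and>
     (\<forall>i\<le>D. \<forall>j\<le>D. \<forall>l\<le>D. \<forall>x y. (x, y) \<in> R l \<longrightarrow>
         card {z. (x, z) \<in> R i \<and> (z, y) \<in> R j} = card {z. (x, z) \<in> R j \<and> (z, y) \<in> R i})"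

definition adj :: "('a::finite \<times> 'a) set \<Rightarrow> complex^'a^'a" where
  "adj S = (\<chi> x y. if (x, y) \<in> S then 1 else 0)"

definition mat_scale :: "complex \<Rightarrow> complex^'a^'a \<Rightarrow> complex^'a^'a" where
  "mat_scale c M = (\<chi> i j. c * M $ i $ j)"

definition bose_mesner :: "(nat \<Rightarrow> ('a::finite \<times> 'a) set) \<Rightarrow> nat \<Rightarrow> (complex^'a^'a) set" where
  "bose_mesner R D = {M. \<exists>c::nat \<Rightarrow> complex. M = (\<Sum>i\<le>D. mat_scale (c i) (adj (R i)))}"

definition mat_pow :: "complex^'a^'a \<Rightarrow> nat \<Rightarrow> complex^'a^'a" where
  "mat_pow A k = (((**) A) ^^ k) (mat 1)"

definition poly_mat :: "complex poly \<Rightarrow> complex^'a^'a \<Rightarrow> complex^'a^'a" where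
  "poly_mat p A = (\<Sum>k\<le>degree p. mat_scale (coeff p k) (mat_pow A k))"

definition generates :: "complex^'a^'a \<Rightarrow> (complex^'a^'a) set \<Rightarrow> bool" where
  "generates A M \<longleftrightarrow> (\<forall>B\<in>M. \<exists>p. B = poly_mat p A)"

definition eigenvalues :: "complex^'a^'a \<Rightarrow> complex set" where
  "eigenvalues M = {c. \<exists>v. v \<noteq> 0 \<and> M *v v = c *s v}"

text \<open>Symmetrization for the case R_d^T = R_{d+1}, others symmetric.\<close>
definition symmetrization :: "(nat \<Rightarrow> ('a \<times> 'a) set) \<Rightarrow> nat \<Rightarrow> nat \<Rightarrow> ('a \<times> 'a) set" where
  "symmetrization R d i = (if i < d then R i else R d \<union> R (Suc d))"

end

theory Submission
  imports Defs "HOL-Computational_Algebra.Fundamental_Theorem_Algebra"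
begin

(* Let B be the adjacency matrix of R_d. Its transpose, the adjacency matrix of R_(d+1), is its
   conjugate transpose, so commutativity of the scheme makes B normal, and B + B^T is the adjacency
   matrix of the symmetrized relation.

   If a matrix has m distinct eigenvalues, its powers I, ..., Z^(m-1) are linearly independent
   (Vandermonde); if it is normal, its minimal polynomial has simple roots, so conversely all its
   powers lie in the span of I, ..., Z^(m-1). Hence B, whose powers lie in the Bose-Mesner algebra
   of dimension d + 2, has at most d + 2 eigenvalues, while B + B^T, which generates the symmetrized
   algebra of dimension d + 1, has at least d + 1.

   Every eigenvalue of B + B^T is l + cnj l for an eigenvalue l of B (take a common eigenvector).
   As B differs from B^T, the normal matrix B - B^T has a nonzero eigenvalue, which produces a
   non-real eigenvalue l of B; B is real, so cnj l is another eigenvalue with the same image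
   l + cnj l. Therefore B has at least, hence exactly, d + 2 eigenvalues, and its powers
   I, ..., B^(d+1) form a basis of the Bose-Mesner algebra. *)

section \<open>The algebra of complex square matrices\<close>

lemma mat_scale_entry [simp]: "mat_scale c M $ i $ j = c * M $ i $ j"
  by (simp add: mat_scale_def)

lemma matrix_mul_mat_scale_right: "(A::complex^'n^'n) ** mat_scale c M = mat_scale c (A ** M)"
  by (simp add: vec_eq_iff matrix_matrix_mult_def sum_distrib_left mult.left_commute)

lemma matrix_mul_mat_scale_left: "mat_scale c (M::complex^'n^'n) ** A = mat_scale c (M ** A)"
  by (simp add: vec_eq_iff matrix_matrix_mult_def sum_distrib_left mult.assoc)

lemma matrix_add_rdistrib: "(B + C) ** (A::complex^'n^'n) = B ** A + C ** A"
  by (simp add: vec_eq_iff matrix_matrix_mult_def sum.distrib distrib_right)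

lemma matrix_diff_rdistrib: "(B - C) ** (A::complex^'n^'n) = B ** A - C ** A"
  by (simp add: vec_eq_iff matrix_matrix_mult_def sum_subtractf left_diff_distrib)

lemma matrix_diff_ldistrib: "(A::complex^'n^'n) ** (B - C) = A ** B - A ** C"
  by (simp add: vec_eq_iff matrix_matrix_mult_def sum_subtractf right_diff_distrib)

lemma matrix_mul_sum_right: "(A::complex^'n^'n) ** sum f K = (\<Sum>k\<in>K. A ** f k)"
  by (induction K rule: infinite_finite_induct) (simp_all add: matrix_add_ldistrib)

lemma matrix_mul_sum_left: "sum f K ** (A::complex^'n^'n) = (\<Sum>k\<in>K. f k ** A)"
  by (induction K rule: infinite_finite_induct) (simp_all add: matrix_add_rdistrib)

lemma mat_scale_mat_1: "mat_scale c (mat 1) = mat c"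
  by (simp add: vec_eq_iff mat_def)

lemma matrix_mul_mat_left: "mat c ** (M::complex^'n^'n) = mat_scale c M"
  by (metis matrix_mul_mat_scale_left mat_scale_mat_1 matrix_mul_lid)

lemma matrix_mul_mat_right: "(M::complex^'n^'n) ** mat c = mat_scale c M"
  by (simp add: vec_eq_iff matrix_matrix_mult_def mat_def if_distrib if_distribR mult.commute
      cong: if_cong)

lemma mat_scale_matrix_vector_mult: "mat_scale c M *v v = c *s (M *v v)"
  by (simp add: vec_eq_iff matrix_vector_mult_def sum_distrib_left mult.assoc)

lemma matrix_vector_mult_smult: "(M::complex^'n^'n) *v (c *s v) = c *s (M *v v)"
  by (simp add: vec_eq_iff matrix_vector_mult_def sum_distrib_left mult.left_commute)

lemma mat_matrix_vector_mult: "mat c *v v = c *s (v::complex^'n)"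
  by (metis mat_scale_mat_1 mat_scale_matrix_vector_mult matrix_vector_mul_lid)

text \<open>The matrix unit \<open>E\<^sub>i\<^sub>j\<close> is written \<open>axis i (axis j 1)\<close>.\<close>

interpretation cmat: vector_space "mat_scale :: complex \<Rightarrow> complex^'n^'n \<Rightarrow> complex^'n^'n"
  by unfold_locales (simp_all add: vec_eq_iff algebra_simps)

lemma matrix_in_span_axis:
  "(M::complex^'n^'n) \<in> cmat.span (range (\<lambda>(i, j). axis i (axis j 1)))"
proof -
  have "(\<Sum>i\<in>UNIV. \<Sum>j\<in>UNIV. mat_scale (M $ i $ j) (axis i (axis j 1))) $ a $ b
      = (\<Sum>i\<in>UNIV. if i = a then M $ i $ b else 0)" for a b
    unfolding sum_component mat_scale_entry
    by (intro sum.cong refl) (simp add: axis_def if_distrib[of "\<lambda>x. _ * x"] cong: if_cong)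
  then have "M = (\<Sum>i\<in>UNIV. \<Sum>j\<in>UNIV. mat_scale (M $ i $ j) (axis i (axis j 1)))"
    by (simp add: vec_eq_iff)
  also have "\<dots> \<in> cmat.span (range (\<lambda>(i, j). axis i (axis j 1)))"
    by (intro cmat.span_sum cmat.span_scale cmat.span_base) auto
  finally show ?thesis .
qed

lemma axis_axis_nth: "axis a (axis b (1::complex)) $ i $ j = (if i = a \<and> j = b then 1 else 0)"
  by (simp add: axis_def)

lemma axis_axis_eq_iff: "axis a (axis b (1::complex)) = axis i (axis j 1) \<longleftrightarrow> a = i \<and> b = j"
  by (auto simp: axis_eq_axis)

lemma independent_axis:
  "cmat.independent (range (\<lambda>(i, j). axis i (axis j 1)) :: (complex^'n^'n) set)"
proof (rule cmat.independent_if_scalars_zero)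
  let ?E = "range (\<lambda>(i, j). axis i (axis j 1)) :: (complex^'n^'n) set"
  fix f and x :: "complex^'n^'n"
  assume sum: "(\<Sum>y\<in>?E. mat_scale (f y) y) = 0" and "x \<in> ?E"
  then obtain i j where x: "x = axis i (axis j 1)"
    by auto
  have "(\<Sum>y\<in>?E. mat_scale (f y) y) $ i $ j = (\<Sum>y\<in>?E. if y = x then f y else 0)"
    unfolding sum_component mat_scale_entry
    by (intro sum.cong refl) (auto simp: x axis_axis_nth axis_axis_eq_iff)
  with sum \<open>x \<in> ?E\<close> show "f x = 0"
    by simp
qed simp

interpretation cmat: finite_dimensional_vector_space
  "mat_scale :: complex \<Rightarrow> complex^'n^'n \<Rightarrow> complex^'n^'n"
  "range (\<lambda>(i, j). axis i (axis j 1))"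
  by unfold_locales (use independent_axis matrix_in_span_axis in auto)

section \<open>Polynomials in a matrix\<close>

lemma mat_pow_0 [simp]: "mat_pow A 0 = mat 1"
  by (simp add: mat_pow_def)

lemma mat_pow_Suc: "mat_pow A (Suc k) = A ** mat_pow A k"
  by (simp add: mat_pow_def)

lemma poly_mat_eq_sum_lessThan:
  assumes "degree p < n"
  shows "poly_mat p A = (\<Sum>k<n. mat_scale (coeff p k) (mat_pow A k))"
  unfolding poly_mat_def
  using assms by (intro sum.mono_neutral_left) (auto simp: coeff_eq_0)

lemma poly_mat_0 [simp]: "poly_mat 0 A = 0"
  by (simp add: poly_mat_def)

lemma poly_mat_pCons: "poly_mat (pCons a p) A = mat a + A ** poly_mat p A"
proof -
  let ?n = "Suc (degree p)"
  have "poly_mat (pCons a p) A = (\<Sum>k<Suc ?n. mat_scale (coeff (pCons a p) k) (mat_pow A k))"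
    by (rule poly_mat_eq_sum_lessThan) (simp add: degree_pCons_le le_imp_less_Suc)
  also have "\<dots> = mat_scale a (mat 1) + (\<Sum>k<?n. mat_scale (coeff p k) (A ** mat_pow A k))"
    by (subst sum.lessThan_Suc_shift) (simp add: mat_pow_Suc)
  also have "(\<Sum>k<?n. mat_scale (coeff p k) (A ** mat_pow A k)) = A ** poly_mat p A"
    by (simp add: poly_mat_eq_sum_lessThan[of p ?n] matrix_mul_sum_right matrix_mul_mat_scale_right
        del: sum.lessThan_Suc)
  finally show ?thesis by (simp add: mat_scale_mat_1)
qed

lemma poly_mat_const [simp]: "poly_mat [:c:] A = mat c"
  using poly_mat_pCons[of c 0 A] by simp

lemma poly_mat_linear: "poly_mat [:-r, 1:] A = A - mat r"
proof -
  have "poly_mat [:-r, 1:] A = mat (-r) + A"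
    using poly_mat_pCons[of "-r" "[:1:]" A] by simp
  then show ?thesis
    by (simp add: vec_eq_iff mat_def)
qed

lemma poly_mat_add: "poly_mat (p + q) A = poly_mat p A + poly_mat q A"
proof -
  let ?n = "Suc (max (degree p) (degree q))"
  have "degree (p + q) < ?n"
    using degree_add_le_max[of p q] by (simp add: le_imp_less_Suc)
  then show ?thesis
    by (simp add: poly_mat_eq_sum_lessThan[of _ ?n] sum.distrib[symmetric] cmat.scale_left_distrib)
qed

lemma poly_mat_smult: "poly_mat (smult c p) A = mat_scale c (poly_mat p A)"
  by (simp add: poly_mat_eq_sum_lessThan[of _ "Suc (degree p)"] cmat.scale_sum_right
      del: sum.lessThan_Suc)

lemma poly_mat_mult: "poly_mat (p * q) A = poly_mat p A ** poly_mat q A"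
proof (induction p rule: pCons_induct)
  case (pCons a p)
  have "poly_mat (pCons a p * q) A
      = mat_scale a (poly_mat q A) + A ** (poly_mat p A ** poly_mat q A)"
    by (simp add: poly_mat_add poly_mat_smult poly_mat_pCons pCons.IH)
  also have "\<dots> = poly_mat (pCons a p) A ** poly_mat q A"
    by (simp add: poly_mat_pCons matrix_add_rdistrib matrix_mul_assoc matrix_mul_mat_left)
  finally show ?case .
qed simp

lemma poly_mat_linear_factor:
  "poly_mat ([:-r, 1:] * p) A = (A - mat r) ** poly_mat p A"
  "poly_mat ([:-r, 1:] * p) A = poly_mat p A ** (A - mat r)"
  by (simp only: poly_mat_mult poly_mat_linear,
      simp only: poly_mat_mult poly_mat_linear mult.commute[of "[:-r, 1:]" p])

lemma poly_mat_mod: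
  assumes "poly_mat P A = 0"
  shows "poly_mat (p mod P) A = poly_mat p A"
  using poly_mat_add[of "p div P * P" "p mod P" A] by (simp add: poly_mat_mult assms)

lemma poly_mat_commute:
  assumes "W ** A = A ** (W::complex^'n^'n)"
  shows "W ** poly_mat p A = poly_mat p A ** W"
proof (induction p rule: pCons_induct)
  case (pCons a p)
  have "W ** mat a = mat a ** W"
    by (simp add: matrix_mul_mat_left matrix_mul_mat_right)
  then show ?case
    by (simp add: poly_mat_pCons matrix_add_ldistrib matrix_add_rdistrib matrix_mul_assoc assms
        pCons.IH) (simp add: pCons.IH flip: matrix_mul_assoc)
qed simp

lemma poly_mat_eigenvector:
  assumes "A *v v = l *s v"
  shows "poly_mat p A *v v = poly p l *s v"
  by (induction p rule: pCons_induct)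
    (simp_all add: poly_mat_pCons matrix_vector_mult_add_rdistrib mat_matrix_vector_mult
      assms matrix_vector_mult_smult vector_sadd_rdistrib vector_smult_assoc
      flip: matrix_vector_mul_assoc)

lemma coeff_sum_monom: "coeff (\<Sum>k<n. monom (u k) k) j = (if j < n then u j else 0)"
  by (simp add: coeff_sum coeff_monom)

lemma poly_mat_sum_monom:
  "poly_mat (\<Sum>k<n. monom (u k) k) A = (\<Sum>k<n. mat_scale (u k) (mat_pow A k))"
proof -
  have "degree (\<Sum>k<n. monom (u k) k) < Suc n"
    by (intro le_imp_less_Suc degree_sum_le) (auto intro: order.trans[OF degree_monom_le])
  then show ?thesis
    by (simp add: poly_mat_eq_sum_lessThan[of _ "Suc n"] coeff_sum_monom)
qed

lemma poly_mat_monom: "poly_mat (monom c k) A = mat_scale c (mat_pow A k)"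
  using poly_mat_sum_monom[where n = "Suc k" and u = "\<lambda>j. if j = k then c else 0"]
  by (simp add: if_distrib[of "\<lambda>c. monom c _"] if_distrib[of "\<lambda>c. mat_scale c _"]
      cong: if_cong)

lemma poly_mat_diff: "poly_mat (p - q) A = poly_mat p A - poly_mat q A"
proof -
  have "poly_mat (p + smult (-1) q) A = poly_mat p A + mat_scale (-1) (poly_mat q A)"
    by (simp only: poly_mat_add poly_mat_smult)
  then show ?thesis
    by (simp add: vec_eq_iff)
qed

section \<open>Eigenvalues and annihilating polynomials\<close>

lemma annihilator_of_mat_pow_eq:
  assumes "i \<noteq> j" "mat_pow Z i = mat_pow Z j"
  shows "monom 1 i - monom 1 j \<noteq> (0::complex poly)" "poly_mat (monom 1 i - monom 1 j) Z = 0"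
proof -
  have "coeff (monom 1 i - monom 1 j) i = (1::complex)"
    using assms(1) by (simp add: coeff_monom)
  then show "monom 1 i - monom 1 j \<noteq> (0::complex poly)"
    by (metis coeff_0 zero_neq_one)
  show "poly_mat (monom 1 i - monom 1 j) Z = 0"
    using assms(2) by (simp add: poly_mat_diff poly_mat_monom)
qed

lemma annihilator_of_dependent_mat_pow:
  assumes "inj_on (mat_pow Z) {..<m}" "cmat.dependent (mat_pow Z ` {..<m})"
  obtains q where "q \<noteq> 0" "degree q < m" "poly_mat q Z = 0"
proof -
  obtain u where u: "\<exists>v\<in>mat_pow Z ` {..<m}. u v \<noteq> 0"
    "(\<Sum>v\<in>mat_pow Z ` {..<m}. mat_scale (u v) v) = 0"
    using assms(2) cmat.dependent_finite[of "mat_pow Z ` {..<m}"] by auto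
  define q where "q = (\<Sum>k<m. monom (u (mat_pow Z k)) k)"
  obtain k where "k < m" "u (mat_pow Z k) \<noteq> 0"
    using u(1) by auto
  then have "coeff q k \<noteq> 0"
    by (simp add: q_def coeff_sum_monom)
  then have "q \<noteq> 0"
    by auto
  moreover have "degree q \<le> m - 1"
    unfolding q_def by (rule degree_sum_le) (auto intro: order.trans[OF degree_monom_le])
  then have "degree q < m"
    using \<open>k < m\<close> by linarith
  moreover have "poly_mat q Z = 0"
    using u(2) by (simp add: q_def poly_mat_sum_monom sum.reindex[OF assms(1)])
  ultimately show thesis
    using that by blast
qed

lemma matrix_annihilator_exists:
  fixes Z :: "complex^'n^'n"
  obtains q where "q \<noteq> 0" "poly_mat q Z = 0"
proof (cases "inj_on (mat_pow Z) {..<Suc (cmat.dim (UNIV :: (complex^'n^'n) set))}")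
  case True
  let ?P = "mat_pow Z ` {..<Suc (cmat.dim (UNIV :: (complex^'n^'n) set))}"
  have "card ?P > cmat.dim (UNIV :: (complex^'n^'n) set)"
    using True by (simp add: card_image)
  then have "cmat.dependent ?P"
    using cmat.independent_card_le_dim[OF subset_UNIV, of ?P] by linarith
  with True that show thesis
    by (metis annihilator_of_dependent_mat_pow)
next
  case False
  then obtain i j where "i \<noteq> j" "mat_pow Z i = mat_pow Z j"
    by (auto simp: inj_on_def)
  with that show thesis
    using annihilator_of_mat_pow_eq by blast
qed

lemma eigenvalues_subset_roots:
  assumes "poly_mat q Z = 0"
  shows "eigenvalues Z \<subseteq> {x. poly q x = 0}"
proof
  fix l
  assume "l \<in> eigenvalues Z"
  then obtain v where "v \<noteq> 0" "Z *v v = l *s v"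
    by (auto simp: eigenvalues_def)
  with poly_mat_eigenvector[of Z v l q] assms show "l \<in> {x. poly q x = 0}"
    by simp
qed

lemma finite_eigenvalues: "finite (eigenvalues (Z::complex^'n^'n))"
proof -
  obtain q where "q \<noteq> 0" "poly_mat q Z = 0"
    by (rule matrix_annihilator_exists)
  then show ?thesis
    by (intro finite_subset[OF eigenvalues_subset_roots poly_roots_finite])
qed

lemma card_eigenvalues_le_degree:
  assumes "q \<noteq> 0" "poly_mat q Z = 0"
  shows "card (eigenvalues Z) \<le> degree q"
  using card_mono[OF poly_roots_finite eigenvalues_subset_roots, of q Z] card_poly_roots_bound[of q]
    assms by simp

lemma inj_on_mat_pow: "inj_on (mat_pow Z) {..<card (eigenvalues Z)}"
proof (rule inj_onI, rule ccontr)
  fix i j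
  assume ij: "i \<in> {..<card (eigenvalues Z)}" "j \<in> {..<card (eigenvalues Z)}"
    "mat_pow Z i = mat_pow Z j" "i \<noteq> j"
  define q :: "complex poly" where "q = monom 1 i - monom 1 j"
  have "q \<noteq> 0" "poly_mat q Z = 0"
    unfolding q_def using annihilator_of_mat_pow_eq ij(3,4) by blast+
  moreover have "degree q \<le> max i j"
    unfolding q_def by (rule order.trans[OF degree_diff_le_max]) (simp add: degree_monom_eq)
  then have "degree q < card (eigenvalues Z)"
    using ij(1,2) by simp
  ultimately show False
    using card_eigenvalues_le_degree[of q Z] by linarith
qed

lemma independent_mat_pow: "cmat.independent (mat_pow Z ` {..<card (eigenvalues Z)})"
proof
  assume "cmat.dependent (mat_pow Z ` {..<card (eigenvalues Z)})"
  then obtain q where "q \<noteq> 0" "degree q < card (eigenvalues Z)" "poly_mat q Z = 0"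
    using annihilator_of_dependent_mat_pow[OF inj_on_mat_pow] by blast
  then show False
    using card_eigenvalues_le_degree[of q Z] by linarith
qed

lemma complex_poly_linear_factor:
  assumes "degree (q::complex poly) \<noteq> 0"
  obtains r q' where "q = [:-r, 1:] * q'" "q' \<noteq> 0" "degree q' < degree q"
proof -
  have "\<not> constant (poly q)"
    using assms by (simp add: constant_degree)
  then obtain r where "poly q r = 0"
    using fundamental_theorem_of_algebra by blast
  then obtain q' where q': "q = [:-r, 1:] * q'"
    by (metis dvdE poly_eq_0_iff_dvd)
  with assms have "q' \<noteq> 0"
    by auto
  then have "degree q = Suc (degree q')"
    unfolding q' by (subst degree_mult_eq) simp_all
  with q' \<open>q' \<noteq> 0\<close> that show ?thesis
    by simp
qed

lemma eigenvector_in_cyclic_subspace: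
  fixes Z :: "complex^'n^'n"
  assumes "v \<noteq> 0"
  obtains g l where "poly_mat g Z *v v \<noteq> 0"
    "Z *v (poly_mat g Z *v v) = l *s (poly_mat g Z *v v)"
proof -
  have "\<exists>g l. poly_mat g Z *v v \<noteq> 0 \<and> Z *v (poly_mat g Z *v v) = l *s (poly_mat g Z *v v)"
    if "q \<noteq> 0" "poly_mat q Z *v v = 0" for q
    using that
  proof (induction "degree q" arbitrary: q rule: less_induct)
    case less
    show ?case
    proof (cases "degree q = 0")
      case True
      then obtain c where "q = [:c:]"
        by (rule degree_eq_zeroE)
      with less.prems assms show ?thesis
        by (simp add: mat_matrix_vector_mult)
    next
      case False
      then obtain r q' where q': "q = [:-r, 1:] * q'" "q' \<noteq> 0" "degree q' < degree q"
        by (rule complex_poly_linear_factor)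
      have "(Z - mat r) *v (poly_mat q' Z *v v) = 0"
        using less.prems(2)[unfolded q' poly_mat_linear_factor(1)]
        by (simp add: matrix_vector_mul_assoc)
      then have "Z *v (poly_mat q' Z *v v) = r *s (poly_mat q' Z *v v)"
        by (simp add: matrix_vector_mult_diff_rdistrib mat_matrix_vector_mult)
      then show ?thesis
        using less.hyps[OF q'(3) q'(2)] by blast
    qed
  qed
  moreover obtain q where "q \<noteq> 0" "poly_mat q Z *v v = 0"
    by (rule matrix_annihilator_exists[of Z]) simp
  ultimately show ?thesis
    using that by blast
qed

lemma common_eigenvector:
  fixes W Z :: "complex^'n^'n"
  assumes "W ** Z = Z ** W" "W *v v = mu *s v" "v \<noteq> 0"
  obtains w l where "w \<noteq> 0" "W *v w = mu *s w" "Z *v w = l *s w"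
proof -
  obtain g l where gl: "poly_mat g Z *v v \<noteq> 0"
    "Z *v (poly_mat g Z *v v) = l *s (poly_mat g Z *v v)"
    using eigenvector_in_cyclic_subspace[OF assms(3)] by blast
  have "W *v (poly_mat g Z *v v) = mu *s (poly_mat g Z *v v)"
    using poly_mat_commute[OF assms(1), of g] assms(2)
    by (metis matrix_vector_mul_assoc matrix_vector_mult_smult)
  with gl that show ?thesis
    by blast
qed

section \<open>Normal matrices\<close>

definition cinner :: "complex^'n \<Rightarrow> complex^'n \<Rightarrow> complex" where
  "cinner v w = (\<Sum>i\<in>UNIV. cnj (v $ i) * w $ i)"

definition conj_transpose :: "complex^'n^'n \<Rightarrow> complex^'n^'n" where
  "conj_transpose Z = (\<chi> i j. cnj (Z $ j $ i))"

definition normal_matrix :: "complex^'n^'n \<Rightarrow> bool" where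
  "normal_matrix Z \<longleftrightarrow> Z ** conj_transpose Z = conj_transpose Z ** Z"

lemma cinner_matrix_vector_mult: "cinner (Z *v v) w = cinner v (conj_transpose Z *v w)"
proof -
  have "cinner (Z *v v) w = (\<Sum>i\<in>UNIV. \<Sum>j\<in>UNIV. cnj (Z $ i $ j) * cnj (v $ j) * w $ i)"
    by (simp add: cinner_def matrix_vector_mult_def sum_distrib_right)
  also have "\<dots> = (\<Sum>j\<in>UNIV. \<Sum>i\<in>UNIV. cnj (Z $ i $ j) * cnj (v $ j) * w $ i)"
    by (rule sum.swap)
  also have "\<dots> = cinner v (conj_transpose Z *v w)"
    by (simp add: cinner_def conj_transpose_def matrix_vector_mult_def sum_distrib_left mult_ac)
  finally show ?thesis .
qed

lemma cinner_zero_right [simp]: "cinner v 0 = 0"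
  by (simp add: cinner_def)

lemma cinner_self_eq_0_iff: "cinner v v = 0 \<longleftrightarrow> v = 0"
proof -
  have "cinner v v = of_real (\<Sum>i\<in>UNIV. (norm (v $ i))\<^sup>2)"
    unfolding cinner_def of_real_sum
    by (intro sum.cong refl) (metis complex_norm_square mult.commute)
  then have "cinner v v = 0 \<longleftrightarrow> (\<forall>i. norm (v $ i) ^ 2 = 0)"
    by (simp only: of_real_eq_0_iff sum_nonneg_eq_0_iff finite zero_le_power2) simp
  then show ?thesis
    by (simp add: vec_eq_iff)
qed

lemma conj_transpose_conj_transpose [simp]: "conj_transpose (conj_transpose Z) = Z"
  by (simp add: conj_transpose_def vec_eq_iff)

lemma conj_transpose_add: "conj_transpose (X + Y) = conj_transpose X + conj_transpose Y"
  by (simp add: conj_transpose_def vec_eq_iff)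

lemma conj_transpose_diff: "conj_transpose (X - Y) = conj_transpose X - conj_transpose Y"
  by (simp add: conj_transpose_def vec_eq_iff)

lemma conj_transpose_mat: "conj_transpose (mat r) = mat (cnj r)"
  by (simp add: conj_transpose_def vec_eq_iff mat_def)

lemma normal_matrix_kernel:
  assumes "normal_matrix Z" "Z *v u = 0"
  shows "conj_transpose Z *v u = 0"
proof -
  have "cinner (conj_transpose Z *v u) (conj_transpose Z *v u)
      = cinner u (Z *v (conj_transpose Z *v u))"
    using cinner_matrix_vector_mult[of "conj_transpose Z" u] by simp
  also have "\<dots> = cinner u (conj_transpose Z *v (Z *v u))"
    using assms(1) by (simp add: normal_matrix_def matrix_vector_mul_assoc)
  finally show ?thesis
    using assms(2) by (simp add: cinner_self_eq_0_iff)
qed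

lemma normal_matrix_square_kernel:
  assumes "normal_matrix Z" "Z *v (Z *v u) = 0"
  shows "Z *v u = 0"
proof -
  have "conj_transpose Z *v (Z *v u) = 0"
    by (rule normal_matrix_kernel[OF assms])
  then have "cinner (Z *v u) (Z *v u) = 0"
    by (simp add: cinner_matrix_vector_mult)
  then show ?thesis
    by (simp add: cinner_self_eq_0_iff)
qed

lemma normal_matrix_diff_mat:
  assumes "normal_matrix Z"
  shows "normal_matrix (Z - mat r)"
  using assms
  by (simp add: normal_matrix_def conj_transpose_diff conj_transpose_mat matrix_diff_rdistrib
      matrix_diff_ldistrib matrix_mul_mat_left matrix_mul_mat_right algebra_simps)
    (simp add: vec_eq_iff mat_def mult.commute)

lemma normal_matrix_if_conj_transpose_eq:
  assumes "conj_transpose Z = Z \<or> conj_transpose Z = - Z"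
  shows "normal_matrix Z"
proof -
  have "Z ** (- Z) = (- Z) ** Z"
    by (simp add: vec_eq_iff matrix_matrix_mult_def sum_negf)
  with assms show ?thesis
    unfolding normal_matrix_def by auto
qed

lemma normal_matrix_eigenvector_conj_transpose:
  assumes "normal_matrix Z" "Z *v w = l *s w"
  shows "conj_transpose Z *v w = cnj l *s w"
proof -
  have "(Z - mat l) *v w = 0"
    using assms(2) by (simp add: matrix_vector_mult_diff_rdistrib mat_matrix_vector_mult)
  then have "conj_transpose (Z - mat l) *v w = 0"
    by (rule normal_matrix_kernel[OF normal_matrix_diff_mat[OF assms(1)]])
  then show ?thesis
    by (simp add: conj_transpose_diff conj_transpose_mat matrix_vector_mult_diff_rdistrib
        mat_matrix_vector_mult)
qed

lemma poly_mat_const_kernel: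
  assumes "degree q = 0" "q \<noteq> 0" "poly_mat q Z *v v = 0"
  shows "v = 0"
proof -
  obtain c where "q = [:c:]"
    using assms(1) by (rule degree_eq_zeroE)
  with assms(2,3) show ?thesis
    by (simp add: mat_matrix_vector_mult)
qed

lemma kernel_diff_mat_not_eigenvalue:
  assumes "r \<notin> eigenvalues Z" "(Z - mat r) *v u = 0"
  shows "u = 0"
  using assms
  by (auto simp: eigenvalues_def matrix_vector_mult_diff_rdistrib mat_matrix_vector_mult)

text \<open>Here normality enters: the kernel of \<open>(Z - r)\<^sup>2\<close> equals that of \<open>Z - r\<close>, so each
  eigenvalue needs to occur only once as a root of an annihilating polynomial.\<close>

lemma kernel_prod_eigenvalues_diff_mat:
  assumes "normal_matrix Z" "r \<in> eigenvalues Z"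
    and "poly_mat (\<Prod>l\<in>eigenvalues Z. [:-l, 1:]) Z *v ((Z - mat r) *v v) = 0"
  shows "poly_mat (\<Prod>l\<in>eigenvalues Z. [:-l, 1:]) Z *v v = 0"
proof -
  let ?P = "\<Prod>l\<in>eigenvalues Z. [:-l, 1:]"
  obtain P' where P': "?P = [:-r, 1:] * P'"
    using prod.remove[OF finite_eigenvalues assms(2)] by blast
  have "poly_mat ([:-r, 1:] * ([:-r, 1:] * P')) Z = poly_mat (?P * [:-r, 1:]) Z"
    unfolding P' by (simp only: mult.commute[of "[:-r, 1:]" "[:-r, 1:] * P'"])
  with assms(3) have "(Z - mat r) *v ((Z - mat r) *v (poly_mat P' Z *v v)) = 0"
    by (simp only: poly_mat_mult poly_mat_linear matrix_vector_mul_assoc)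
  then have "(Z - mat r) *v (poly_mat P' Z *v v) = 0"
    by (rule normal_matrix_square_kernel[OF normal_matrix_diff_mat[OF assms(1)]])
  then show ?thesis
    unfolding P' poly_mat_linear_factor(1) by (simp add: matrix_vector_mul_assoc)
qed

lemma kernel_subset_kernel_prod_eigenvalues:
  assumes "normal_matrix Z" "q \<noteq> 0" "poly_mat q Z *v v = 0"
  shows "poly_mat (\<Prod>l\<in>eigenvalues Z. [:-l, 1:]) Z *v v = 0"
  using assms(2,3)
proof (induction "degree q" arbitrary: q v rule: less_induct)
  case less
  show ?case
  proof (cases "degree q = 0")
    case True
    then show ?thesis
      using poly_mat_const_kernel[OF True less.prems] by simp
  next
    case False
    then obtain r q' where q': "q = [:-r, 1:] * q'" "q' \<noteq> 0" "degree q' < degree q"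
      by (rule complex_poly_linear_factor)
    show ?thesis
    proof (cases "r \<in> eigenvalues Z")
      case False
      have "(Z - mat r) *v (poly_mat q' Z *v v) = 0"
        using less.prems(2)[unfolded q' poly_mat_linear_factor(1)]
        by (simp add: matrix_vector_mul_assoc)
      then have "poly_mat q' Z *v v = 0"
        by (rule kernel_diff_mat_not_eigenvalue[OF False])
      then show ?thesis
        by (rule less.hyps[OF q'(3) q'(2)])
    next
      case True
      have "poly_mat q' Z *v ((Z - mat r) *v v) = 0"
        using less.prems(2)[unfolded q' poly_mat_linear_factor(2)]
        by (simp add: matrix_vector_mul_assoc)
      then show ?thesis
        by (rule kernel_prod_eigenvalues_diff_mat[OF assms(1) True less.hyps[OF q'(3) q'(2)]])
    qed
  qed
qed

lemma poly_mat_prod_eigenvalues_normal: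
  assumes "normal_matrix Z"
  shows "poly_mat (\<Prod>l\<in>eigenvalues Z. [:-l, 1:]) Z = 0"
proof -
  obtain q where "q \<noteq> 0" "poly_mat q Z = 0"
    by (rule matrix_annihilator_exists)
  then have "poly_mat (\<Prod>l\<in>eigenvalues Z. [:-l, 1:]) Z *v v = 0 *v v" for v
    using kernel_subset_kernel_prod_eigenvalues[OF assms] by simp
  then show ?thesis
    by (simp add: matrix_eq)
qed

lemma normal_matrix_nonzero_eigenvalue:
  fixes N :: "complex^'n^'n"
  assumes "normal_matrix N" "N \<noteq> 0"
  obtains s where "s \<in> eigenvalues N" "s \<noteq> 0"
proof -
  have "eigenvalues N \<noteq> {}"
  proof
    assume "eigenvalues N = {}"
    then have "mat 1 = (0::complex^'n^'n)"
      using poly_mat_prod_eigenvalues_normal[OF assms(1)] poly_mat_const[of 1 N]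
      by (simp add: one_pCons)
    then have "(mat 1 :: complex^'n^'n) $ i $ i = 0" for i
      by simp
    then show False
      by (simp add: mat_def)
  qed
  moreover have "eigenvalues N \<noteq> {0}"
  proof
    assume "eigenvalues N = {0}"
    then have "N - mat 0 = 0"
      using poly_mat_prod_eigenvalues_normal[OF assms(1)] poly_mat_linear[of 0 N] by simp
    with assms(2) show False
      by simp
  qed
  ultimately show ?thesis
    using that by blast
qed

section \<open>Counting eigenvalues by dimensions\<close>

lemma poly_mat_in_span_mat_pow:
  assumes "p = 0 \<or> degree p < m"
  shows "poly_mat p A \<in> cmat.span (mat_pow A ` {..<m})"
proof (cases "p = 0")
  case False
  with assms have "poly_mat p A = (\<Sum>k<m. mat_scale (coeff p k) (mat_pow A k))"
    by (simp add: poly_mat_eq_sum_lessThan)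
  also have "\<dots> \<in> cmat.span (mat_pow A ` {..<m})"
    by (intro cmat.span_sum cmat.span_scale cmat.span_base) auto
  finally show ?thesis .
qed (simp add: cmat.span_zero)

lemma span_mat_pow_imp_poly_mat:
  assumes "inj_on (mat_pow Z) {..<m}" "X \<in> cmat.span (mat_pow Z ` {..<m})"
  obtains p where "X = poly_mat p Z"
proof -
  obtain u where "X = (\<Sum>v\<in>mat_pow Z ` {..<m}. mat_scale (u v) v)"
    using assms(2) cmat.span_finite[of "mat_pow Z ` {..<m}"] by auto
  also have "\<dots> = poly_mat (\<Sum>k<m. monom (u (mat_pow Z k)) k) Z"
    by (simp add: sum.reindex[OF assms(1)] poly_mat_sum_monom)
  finally show ?thesis
    using that by blast
qed

lemma card_eigenvalues_le_dim:
  assumes "\<And>k. mat_pow Z k \<in> V"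
  shows "card (eigenvalues Z) \<le> cmat.dim V"
proof -
  have "card (eigenvalues Z) = card (mat_pow Z ` {..<card (eigenvalues Z)})"
    by (simp add: card_image[OF inj_on_mat_pow])
  also have "\<dots> \<le> cmat.dim V"
    using assms by (intro cmat.independent_card_le_dim independent_mat_pow) auto
  finally show ?thesis .
qed

lemma dim_le_card_eigenvalues_normal:
  assumes "normal_matrix A" "generates A V"
  shows "cmat.dim V \<le> card (eigenvalues A)"
proof -
  let ?P = "\<Prod>l\<in>eigenvalues A. [:-l, 1:]"
  let ?m = "card (eigenvalues A)"
  have "?P \<noteq> 0"
    by (simp add: prod_zero_iff[OF finite_eigenvalues])
  have "degree ?P = ?m"
    by (simp add: degree_prod_eq_sum_degree)
  have "V \<subseteq> cmat.span (mat_pow A ` {..<?m})"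
  proof
    fix X
    assume "X \<in> V"
    then obtain p where "X = poly_mat (p mod ?P) A"
      using assms(2) poly_mat_mod[OF poly_mat_prod_eigenvalues_normal[OF assms(1)]]
      unfolding generates_def by metis
    moreover have "p mod ?P = 0 \<or> degree (p mod ?P) < ?m"
      using degree_mod_less[OF \<open>?P \<noteq> 0\<close>, of p] \<open>degree ?P = ?m\<close> by auto
    ultimately show "X \<in> cmat.span (mat_pow A ` {..<?m})"
      using poly_mat_in_span_mat_pow by simp
  qed
  then have "cmat.dim V \<le> card (mat_pow A ` {..<?m})"
    by (rule cmat.dim_le_card) simp
  also have "\<dots> \<le> ?m"
    using card_image_le[of "{..<?m}" "mat_pow A"] by simp
  finally show ?thesis .
qed

lemma generates_if_card_eigenvalues_eq_dim:
  assumes "\<And>k. mat_pow Z k \<in> V" "card (eigenvalues Z) = cmat.dim V"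
  shows "generates Z V"
proof -
  let ?B = "mat_pow Z ` {..<card (eigenvalues Z)}"
  have "card ?B = card (eigenvalues Z)"
    by (simp add: card_image[OF inj_on_mat_pow])
  then have "cmat.dim V \<le> card ?B"
    using assms(2) by linarith
  then have "V \<subseteq> cmat.span ?B"
    using assms(1) by (intro cmat.card_ge_dim_independent independent_mat_pow) auto
  then show ?thesis
    unfolding generates_def using span_mat_pow_imp_poly_mat[OF inj_on_mat_pow] by blast
qed

section \<open>The Hermitian part of a real normal matrix\<close>

lemma eigenvalues_add_conj_transpose:
  assumes "normal_matrix B"
  shows "eigenvalues (B + conj_transpose B) \<subseteq> (\<lambda>l. l + cnj l) ` eigenvalues B"
proof
  fix mu
  assume "mu \<in> eigenvalues (B + conj_transpose B)"
  then obtain v where v: "v \<noteq> 0" "(B + conj_transpose B) *v v = mu *s v"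
    by (auto simp: eigenvalues_def)
  have "(B + conj_transpose B) ** B = B ** (B + conj_transpose B)"
    using assms by (simp add: normal_matrix_def matrix_add_rdistrib matrix_add_ldistrib)
  then obtain w l where w: "w \<noteq> 0" "(B + conj_transpose B) *v w = mu *s w" "B *v w = l *s w"
    using common_eigenvector v by blast
  have "(l + cnj l) *s w = mu *s w"
    using w(2,3) normal_matrix_eigenvector_conj_transpose[OF assms w(3)]
    by (simp add: matrix_vector_mult_add_rdistrib vector_sadd_rdistrib)
  then have "l + cnj l = mu \<or> w = 0"
    by (simp only: vector_mul_rcancel)
  then have "mu = l + cnj l"
    using w(1) by auto
  moreover have "l \<in> eigenvalues B"
    using w by (auto simp: eigenvalues_def)
  ultimately show "mu \<in> (\<lambda>l. l + cnj l) ` eigenvalues B"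
    by blast
qed

lemma cnj_mem_eigenvalues_real_matrix:
  assumes "\<forall>i j. cnj (B $ i $ j) = B $ i $ j" "l \<in> eigenvalues B"
  shows "cnj l \<in> eigenvalues B"
proof -
  obtain v where v: "v \<noteq> 0" "B *v v = l *s v"
    using assms(2) by (auto simp: eigenvalues_def)
  have "B *v (\<chi> i. cnj (v $ i)) = (\<chi> i. cnj ((B *v v) $ i))"
    using assms(1) by (simp add: vec_eq_iff matrix_vector_mult_def)
  also have "\<dots> = cnj l *s (\<chi> i. cnj (v $ i))"
    using v(2) by (simp add: vec_eq_iff)
  moreover have "(\<chi> i. cnj (v $ i)) \<noteq> 0"
    using v(1) by (simp add: vec_eq_iff)
  ultimately show ?thesis
    by (auto simp: eigenvalues_def)
qed

lemma nonreal_eigenvalue_exists: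
  assumes "normal_matrix B" "\<forall>i j. cnj (B $ i $ j) = B $ i $ j" "B \<noteq> conj_transpose B"
  obtains l where "l \<in> eigenvalues B" "cnj l \<in> eigenvalues B" "cnj l \<noteq> l"
proof -
  let ?N = "B - conj_transpose B"
  have "conj_transpose ?N = - ?N"
    by (simp add: conj_transpose_diff)
  then have "normal_matrix ?N"
    by (intro normal_matrix_if_conj_transpose_eq) simp
  moreover have "?N \<noteq> 0"
    using assms(3) by simp
  ultimately obtain s where s: "s \<in> eigenvalues ?N" "s \<noteq> 0"
    by (rule normal_matrix_nonzero_eigenvalue)
  then obtain v where v: "v \<noteq> 0" "?N *v v = s *s v"
    by (auto simp: eigenvalues_def)
  have "?N ** B = B ** ?N"
    using assms(1) by (simp add: normal_matrix_def matrix_diff_rdistrib matrix_diff_ldistrib)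
  then obtain w l where w: "w \<noteq> 0" "?N *v w = s *s w" "B *v w = l *s w"
    using common_eigenvector v by blast
  then have "?N *v w = (l - cnj l) *s w"
    using normal_matrix_eigenvector_conj_transpose[OF assms(1) w(3)]
    by (simp add: matrix_vector_mult_diff_rdistrib vector_sub_rdistrib)
  with w s have "cnj l \<noteq> l"
    by auto
  moreover have "l \<in> eigenvalues B"
    using w by (auto simp: eigenvalues_def)
  ultimately show ?thesis
    using that cnj_mem_eigenvalues_real_matrix[OF assms(2)] by blast
qed

text \<open>A non-real eigenvalue \<open>l\<close> and its conjugate are two eigenvalues of \<open>B\<close> with the same
  image \<open>l + cnj l\<close>.\<close>

lemma card_eigenvalues_add_conj_transpose_less:
  assumes "normal_matrix B" "\<forall>i j. cnj (B $ i $ j) = B $ i $ j" "B \<noteq> conj_transpose B"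
  shows "card (eigenvalues (B + conj_transpose B)) < card (eigenvalues B)"
proof -
  obtain l where l: "l \<in> eigenvalues B" "cnj l \<in> eigenvalues B" "cnj l \<noteq> l"
    using nonreal_eigenvalue_exists[OF assms] .
  have "eigenvalues (B + conj_transpose B) \<subseteq> (\<lambda>l. l + cnj l) ` (eigenvalues B - {l})"
  proof
    fix mu
    assume "mu \<in> eigenvalues (B + conj_transpose B)"
    then obtain k where "k \<in> eigenvalues B" "mu = k + cnj k"
      using eigenvalues_add_conj_transpose[OF assms(1)] by blast
    moreover have "l + cnj l = cnj l + cnj (cnj l)"
      by simp
    ultimately show "mu \<in> (\<lambda>l. l + cnj l) ` (eigenvalues B - {l})"
      using l by (cases "k = l") blast+
  qed
  then have "card (eigenvalues (B + conj_transpose B))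
      \<le> card ((\<lambda>l. l + cnj l) ` (eigenvalues B - {l}))"
    by (intro card_mono) (simp_all add: finite_eigenvalues)
  also have "\<dots> \<le> card (eigenvalues B - {l})"
    by (intro card_image_le) (simp add: finite_eigenvalues)
  also have "\<dots> < card (eigenvalues B)"
    by (rule card_Diff1_less[OF finite_eigenvalues l(1)])
  finally show ?thesis .
qed

section \<open>Bose--Mesner algebras\<close>

lemma adj_nth [simp]: "adj S $ x $ y = (if (x, y) \<in> S then 1 else 0)"
  by (simp add: adj_def)

lemma conj_transpose_adj: "conj_transpose (adj S) = adj (converse S)"
  by (simp add: conj_transpose_def vec_eq_iff)

lemma adj_Un_converse:
  "S \<inter> converse S = {} \<Longrightarrow> adj (S \<union> converse S) = adj S + conj_transpose (adj S)"
  by (auto simp: vec_eq_iff conj_transpose_adj)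

lemma adj_ne_conj_transpose:
  assumes "S \<noteq> {}" "S \<inter> converse S = {}"
  shows "adj S \<noteq> conj_transpose (adj S)"
proof -
  obtain x y where "(x, y) \<in> S"
    using assms(1) by auto
  with assms(2) have "adj S $ x $ y \<noteq> adj (converse S) $ x $ y"
    by auto
  then show ?thesis
    by (metis conj_transpose_adj)
qed

lemma sum_adj_nth:
  fixes Q :: "nat \<Rightarrow> ('a::finite \<times> 'a) set"
  assumes "\<forall>i\<le>D. \<forall>j\<le>D. i \<noteq> j \<longrightarrow> Q i \<inter> Q j = {}" "l \<le> D" "(x, y) \<in> Q l"
  shows "(\<Sum>i\<le>D. mat_scale (c i) (adj (Q i))) $ x $ y = c l"
proof -
  have "(\<Sum>i\<le>D. mat_scale (c i) (adj (Q i))) $ x $ y = (\<Sum>i\<le>D. if i = l then c i else 0)"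
    unfolding sum_component mat_scale_entry using assms by (intro sum.cong refl) auto
  also have "\<dots> = c l"
    using assms(2) by simp
  finally show ?thesis .
qed

lemma inj_on_adj:
  fixes Q :: "nat \<Rightarrow> ('a::finite \<times> 'a) set"
  assumes "\<forall>i\<le>D. Q i \<noteq> {}" "\<forall>i\<le>D. \<forall>j\<le>D. i \<noteq> j \<longrightarrow> Q i \<inter> Q j = {}"
  shows "inj_on (\<lambda>i. adj (Q i)) {..D}"
proof (rule inj_onI, rule ccontr)
  fix i j
  assume ij: "i \<in> {..D}" "j \<in> {..D}" "adj (Q i) = adj (Q j)" "i \<noteq> j"
  then obtain x y where "(x, y) \<in> Q i"
    using assms(1) by fastforce
  moreover have "adj (Q i) $ x $ y = adj (Q j) $ x $ y"
    using ij(3) by simp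
  ultimately have "(x, y) \<in> Q j"
    by (metis adj_nth zero_neq_one)
  with \<open>(x, y) \<in> Q i\<close> show False
    using assms(2) ij by blast
qed

lemma independent_adj:
  fixes Q :: "nat \<Rightarrow> ('a::finite \<times> 'a) set"
  assumes "\<forall>i\<le>D. Q i \<noteq> {}" "\<forall>i\<le>D. \<forall>j\<le>D. i \<noteq> j \<longrightarrow> Q i \<inter> Q j = {}"
  shows "cmat.independent ((\<lambda>i. adj (Q i)) ` {..D})"
proof (rule cmat.independent_if_scalars_zero)
  fix f and X :: "complex^'a^'a"
  assume sum: "(\<Sum>Y\<in>(\<lambda>i. adj (Q i)) ` {..D}. mat_scale (f Y) Y) = 0"
    and "X \<in> (\<lambda>i. adj (Q i)) ` {..D}"
  then obtain l where l: "l \<le> D" "X = adj (Q l)"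
    by auto
  then obtain x y where "(x, y) \<in> Q l"
    using assms(1) by fastforce
  then have "(\<Sum>i\<le>D. mat_scale (f (adj (Q i))) (adj (Q i))) $ x $ y = f X"
    using sum_adj_nth[OF assms(2) l(1)] l(2) by simp
  with sum show "f X = 0"
    by (simp add: sum.reindex[OF inj_on_adj[OF assms]])
qed simp

lemma adj_mem_bose_mesner: "l \<le> D \<Longrightarrow> adj (Q l) \<in> bose_mesner Q D"
  unfolding bose_mesner_def
  by (rule CollectI, rule exI[of _ "\<lambda>i. if i = l then 1 else 0"])
    (simp add: if_distrib[of "\<lambda>c. mat_scale c _"] cong: if_cong)

lemma bose_mesner_subset_span: "bose_mesner Q D \<subseteq> cmat.span ((\<lambda>i. adj (Q i)) ` {..D})"
  unfolding bose_mesner_def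
  by (auto intro!: cmat.span_sum cmat.span_scale intro: cmat.span_base)

lemma dim_bose_mesner:
  fixes Q :: "nat \<Rightarrow> ('a::finite \<times> 'a) set"
  assumes "\<forall>i\<le>D. Q i \<noteq> {}" "\<forall>i\<le>D. \<forall>j\<le>D. i \<noteq> j \<longrightarrow> Q i \<inter> Q j = {}"
  shows "cmat.dim (bose_mesner Q D) = D + 1"
proof (rule cmat.dim_unique)
  show "(\<lambda>i. adj (Q i)) ` {..D} \<subseteq> bose_mesner Q D"
    by (auto intro: adj_mem_bose_mesner)
  show "card ((\<lambda>i. adj (Q i)) ` {..D}) = D + 1"
    by (simp add: card_image[OF inj_on_adj[OF assms]])
  show "bose_mesner Q D \<subseteq> cmat.span ((\<lambda>i. adj (Q i)) ` {..D})"
    by (rule bose_mesner_subset_span)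
  show "cmat.independent ((\<lambda>i. adj (Q i)) ` {..D})"
    by (rule independent_adj[OF assms])
qed

lemma assoc_scheme_nonempty: "assoc_scheme R D \<Longrightarrow> \<forall>i\<le>D. R i \<noteq> {}"
  unfolding assoc_scheme_def by (elim conjE)

lemma assoc_scheme_disjoint:
  "assoc_scheme R D \<Longrightarrow> \<forall>i\<le>D. \<forall>j\<le>D. i \<noteq> j \<longrightarrow> R i \<inter> R j = {}"
  unfolding assoc_scheme_def by (elim conjE)

lemma assoc_scheme_cover:
  assumes "assoc_scheme R D"
  obtains l where "l \<le> D" "(x, y) \<in> R l"
proof -
  have "(\<Union>i\<in>{..D}. R i) = UNIV"
    using assms unfolding assoc_scheme_def by (elim conjE)
  with that show ?thesis
    by blast
qed

lemma assoc_scheme_intersection_number: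
  assumes "assoc_scheme R D" "i \<le> D" "j \<le> D" "l \<le> D" "(x, y) \<in> R l" "(x', y') \<in> R l"
  shows "card {z. (x, z) \<in> R i \<and> (z, y) \<in> R j} = card {z. (x', z) \<in> R i \<and> (z, y') \<in> R j}"
proof -
  have "\<forall>i\<le>D. \<forall>j\<le>D. \<forall>l\<le>D. \<exists>p::nat. \<forall>x y. (x, y) \<in> R l \<longrightarrow>
      card {z. (x, z) \<in> R i \<and> (z, y) \<in> R j} = p"
    using assms(1) unfolding assoc_scheme_def by (elim conjE)
  then obtain p where "\<forall>x y. (x, y) \<in> R l \<longrightarrow> card {z. (x, z) \<in> R i \<and> (z, y) \<in> R j} = p"
    using assms(2-4) by blast
  with assms(5,6) show ?thesis
    by simp
qed

lemma mem_bose_mesner_if_constant: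
  assumes "assoc_scheme R D"
    and "\<And>l x y x' y'. l \<le> D \<Longrightarrow> (x, y) \<in> R l \<Longrightarrow> (x', y') \<in> R l \<Longrightarrow> Z $ x $ y = Z $ x' $ y'"
  shows "Z \<in> bose_mesner R D"
proof -
  define c where "c l = Z $ fst (SOME p. p \<in> R l) $ snd (SOME p. p \<in> R l)" for l
  have "Z $ x $ y = (\<Sum>i\<le>D. mat_scale (c i) (adj (R i))) $ x $ y" for x y
  proof -
    obtain l where l: "l \<le> D" "(x, y) \<in> R l"
      using assms(1) by (rule assoc_scheme_cover)
    then have "(SOME p. p \<in> R l) \<in> R l"
      by (intro someI)
    then have "Z $ x $ y = c l"
      unfolding c_def using assms(2)[OF l(1) _ l(2)] by simp
    also have "\<dots> = (\<Sum>i\<le>D. mat_scale (c i) (adj (R i))) $ x $ y"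
      by (rule sum_adj_nth[OF assoc_scheme_disjoint[OF assms(1)] l, symmetric])
    finally show ?thesis .
  qed
  then show ?thesis
    by (auto simp: bose_mesner_def vec_eq_iff)
qed

lemma adj_mult_nth: "(adj S ** adj T) $ x $ y = of_nat (card {z. (x, z) \<in> S \<and> (z, y) \<in> T})"
proof -
  have "(adj S ** adj T) $ x $ y = (\<Sum>z\<in>UNIV. if (x, z) \<in> S \<and> (z, y) \<in> T then 1 else 0)"
    unfolding matrix_matrix_mult_def vec_lambda_beta adj_nth by (intro sum.cong refl) simp
  also have "\<dots> = (\<Sum>z\<in>{z\<in>UNIV. (x, z) \<in> S \<and> (z, y) \<in> T}. 1)"
    by (rule sum.inter_filter[symmetric]) simp
  also have "\<dots> = of_nat (card {z. (x, z) \<in> S \<and> (z, y) \<in> T})"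
    by simp
  finally show ?thesis .
qed

lemma bose_mesner_mult:
  assumes "assoc_scheme R D" "Z \<in> bose_mesner R D" "W \<in> bose_mesner R D"
  shows "Z ** W \<in> bose_mesner R D"
proof -
  obtain a b where ab: "Z = (\<Sum>i\<le>D. mat_scale (a i) (adj (R i)))"
    "W = (\<Sum>j\<le>D. mat_scale (b j) (adj (R j)))"
    using assms(2,3) by (auto simp: bose_mesner_def)
  have "Z ** W = (\<Sum>i\<le>D. mat_scale (a i) (adj (R i) ** W))"
    unfolding ab(1) matrix_mul_sum_left matrix_mul_mat_scale_left ..
  also have "\<dots> = (\<Sum>i\<le>D. mat_scale (a i) (\<Sum>j\<le>D. mat_scale (b j) (adj (R i) ** adj (R j))))"
    unfolding ab(2) matrix_mul_sum_right matrix_mul_mat_scale_right ..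
  finally have ZW: "Z ** W = (\<Sum>i\<le>D. \<Sum>j\<le>D. mat_scale (a i * b j) (adj (R i) ** adj (R j)))"
    by (simp only: cmat.scale_sum_right cmat.scale_scale)
  show ?thesis
  proof (rule mem_bose_mesner_if_constant[OF assms(1)])
    fix l x y x' y'
    assume l: "l \<le> D" "(x, y) \<in> R l" "(x', y') \<in> R l"
    have "card {z. (x, z) \<in> R i \<and> (z, y) \<in> R j} = card {z. (x', z) \<in> R i \<and> (z, y') \<in> R j}"
      if "i \<le> D" "j \<le> D" for i j
      using assoc_scheme_intersection_number[OF assms(1) that l] .
    then show "(Z ** W) $ x $ y = (Z ** W) $ x' $ y'"
      unfolding ZW sum_component mat_scale_entry adj_mult_nth by (intro sum.cong refl) simp
  qed
qed

lemma mat_pow_mem_bose_mesner: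
  assumes "assoc_scheme R D" "Z \<in> bose_mesner R D"
  shows "mat_pow Z k \<in> bose_mesner R D"
proof (induction k)
  case 0
  have "mat 1 = adj (R 0)"
    using assms(1) by (simp add: assoc_scheme_def vec_eq_iff mat_def)
  then show ?case
    using adj_mem_bose_mesner[of 0 D R] by simp
next
  case (Suc k)
  then show ?case
    by (simp add: mat_pow_Suc bose_mesner_mult[OF assms])
qed

lemma adj_mult_commute:
  assumes "commutative_scheme R D" "i \<le> D" "j \<le> D"
  shows "adj (R i) ** adj (R j) = adj (R j) ** adj (R i)"
proof -
  have "(adj (R i) ** adj (R j)) $ x $ y = (adj (R j) ** adj (R i)) $ x $ y" for x y
  proof -
    obtain l where "l \<le> D" "(x, y) \<in> R l"
      using assms(1)[unfolded commutative_scheme_def, THEN conjunct1] by (rule assoc_scheme_cover)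
    then have "card {z. (x, z) \<in> R i \<and> (z, y) \<in> R j} = card {z. (x, z) \<in> R j \<and> (z, y) \<in> R i}"
      using assms(1)[unfolded commutative_scheme_def, THEN conjunct2] assms(2,3) by blast
    then show ?thesis
      by (simp add: adj_mult_nth)
  qed
  then show ?thesis
    by (simp add: vec_eq_iff)
qed

lemma normal_matrix_adj:
  assumes "commutative_scheme R D" "i \<le> D" "j \<le> D" "converse (R i) = R j"
  shows "normal_matrix (adj (R i))"
  unfolding normal_matrix_def conj_transpose_adj assms(4) by (rule adj_mult_commute[OF assms(1-3)])

lemma symmetrization_nonempty:
  assumes "assoc_scheme R (Suc d)"
  shows "\<forall>i\<le>d. symmetrization R d i \<noteq> {}"
proof (intro allI impI)
  fix i
  assume "i \<le> d"
  then have "R i \<noteq> {}"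
    using assoc_scheme_nonempty[OF assms] by simp
  with \<open>i \<le> d\<close> show "symmetrization R d i \<noteq> {}"
    by (auto simp: symmetrization_def)
qed

lemma symmetrization_disjoint:
  assumes "assoc_scheme R (Suc d)"
  shows "\<forall>i\<le>d. \<forall>j\<le>d. i \<noteq> j \<longrightarrow> symmetrization R d i \<inter> symmetrization R d j = {}"
proof -
  have disj: "R k \<inter> R k' = {}" if "k \<le> Suc d" "k' \<le> Suc d" "k \<noteq> k'" for k k'
    using assoc_scheme_disjoint[OF assms, rule_format, OF that] .
  have half: "symmetrization R d i \<inter> symmetrization R d j = {}" if "i < d" "j \<le> d" "i \<noteq> j" for i j
  proof (cases "j < d")
    case False
    then have "R i \<inter> R d = {}" "R i \<inter> R (Suc d) = {}"
      using disj that by simp_all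
    with that False show ?thesis
      by (simp add: symmetrization_def Int_Un_distrib)
  qed (use disj that in \<open>simp add: symmetrization_def\<close>)
  show ?thesis
  proof (intro allI impI)
    fix i j
    assume "i \<le> d" "j \<le> d" "i \<noteq> j"
    then consider "i < d" | "j < d"
      by linarith
    then show "symmetrization R d i \<inter> symmetrization R d j = {}"
    proof cases
      case 1
      then show ?thesis
        using \<open>j \<le> d\<close> \<open>i \<noteq> j\<close> by (rule half)
    next
      case 2
      then have "symmetrization R d j \<inter> symmetrization R d i = {}"
        using \<open>i \<le> d\<close> \<open>i \<noteq> j\<close> by (intro half) simp_all
      then show ?thesis
        by blast
    qed
  qed
qed

theorem theorem1p2:
  fixes R :: "nat \<Rightarrow> ('a::finite \<times> 'a) set" and d :: nat
  assumes "commutative_scheme R (d + 1)"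
    and "converse (R d) = R (d + 1)"
    and "\<forall>i<d. converse (R i) = R i"
    and "generates (adj (R d \<union> R (d + 1))) (bose_mesner (symmetrization R d) d)"
  shows "card (eigenvalues (adj (R d))) = d + 2
         \<and> generates (adj (R d)) (bose_mesner R (d + 1))"
proof -
  have S: "assoc_scheme R (Suc d)"
    using assms(1) by (simp add: commutative_scheme_def)
  define B where "B = adj (R d)"
  have disjoint: "R d \<inter> converse (R d) = {}"
    using assoc_scheme_disjoint[OF S, rule_format, of d "Suc d"] assms(2) by simp
  have A: "adj (R d \<union> R (d + 1)) = B + conj_transpose B"
    using adj_Un_converse[OF disjoint] assms(2) by (simp add: B_def)
  have normal: "normal_matrix B"
    unfolding B_def by (rule normal_matrix_adj[OF assms(1) _ _ assms(2)]) simp_all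
  have "card (eigenvalues (B + conj_transpose B)) < card (eigenvalues B)"
    using assoc_scheme_nonempty[OF S] adj_ne_conj_transpose[OF _ disjoint]
    by (intro card_eigenvalues_add_conj_transpose_less normal) (simp_all add: B_def)
  moreover have "normal_matrix (B + conj_transpose B)"
    by (rule normal_matrix_if_conj_transpose_eq) (simp add: conj_transpose_add add.commute)
  then have "cmat.dim (bose_mesner (symmetrization R d) d)
      \<le> card (eigenvalues (B + conj_transpose B))"
    by (rule dim_le_card_eigenvalues_normal[OF _ assms(4)[unfolded A]])
  then have "d + 1 \<le> card (eigenvalues (B + conj_transpose B))"
    using dim_bose_mesner[OF symmetrization_nonempty[OF S] symmetrization_disjoint[OF S]] by simp
  moreover have powers: "mat_pow B k \<in> bose_mesner R (d + 1)" for k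
    by (simp add: B_def S adj_mem_bose_mesner mat_pow_mem_bose_mesner)
  moreover have dim: "cmat.dim (bose_mesner R (d + 1)) = d + 2"
    using dim_bose_mesner[OF assoc_scheme_nonempty[OF S] assoc_scheme_disjoint[OF S]] by simp
  ultimately have "card (eigenvalues B) = d + 2"
    using card_eigenvalues_le_dim[OF powers] by linarith
  with powers dim show ?thesis
    unfolding B_def by (simp add: generates_if_card_eigenvalues_eq_dim)
qed

end
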